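(* Let $n\ge 2$, $a,b\in\mathbb{Z}_n$, $Q=Q_{a,b}(\mathbb{Z}_n)$, and $x=(x_1,x_2,x_3)$, $y=(y_1,y_2,y_3)$, $z=(z_1,z_2,z_3)\in Q$. Then: (i) $x\backslash y=(y_1-x_1-(y_3-x_3)x_3y_2-a(x_2,y_2-x_2)_n-b(x_3,y_3-x_3)_n,\ y_2-x_2,\ y_3-x_3)$; (ii) $(xy)\backslash(x(yz))=(z_1+y_3(x_3z_2-x_2z_3),\ z_2,\ z_3)$; (iii) $Q$ is a nonassociative commutative A-loop of order $n^3$; (iv) $N_\lambda(Q)=Z(Q)=\mathbb{Z}_n\times 0\times 0$ and $N_\mu(Q)=\mathbb{Z}_n\times\mathbb{Z}_n\times 0$ as subsets of $Q$; (v) $Q/Z(Q)\cong\mathrm{Inn}(Q)\cong\mathbb{Z}_n\times\mathbb{Z}_n$, and $\mathrm{Inn}(Q)=\{L_{u,v}:u,v\in Q\}$; (vi) for every integer $m\ge0$, $x^m=\big(mx_1+2\binom{m+1}{3}x_2x_3^2+at_2+bt_3,\ mx_2,\ mx_3\big)$, where $t_i=\sum_{k=1}^{m-1}(x_i,kx_i)_n$ (the sum is empty and the binomial coefficient is $0$ when $m<2$).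
   Context: Identify $\mathbb{Z}_n$ with $\{0,1,\dots,n-1\}$; all coordinate arithmetic is in $\mathbb{Z}_n$. The overflow indicator is $(x,y)_n=1$ if $x+y\ge n$ as integers and $(x,y)_n=0$ otherwise. For $a,b\in\mathbb{Z}_n$, $Q_{a,b}(\mathbb{Z}_n)$ is the set $\mathbb{Z}_n^3$ with multiplication $(x_1,x_2,x_3)(y_1,y_2,y_3)=(x_1+y_1+(x_2+y_2)x_3y_3+a(x_2,y_2)_n+b(x_3,y_3)_n,\ x_2+y_2,\ x_3+y_3)$; it is a commutative loop with neutral element $(0,0,0)$. $u\backslash w$ denotes the unique $z$ with $uz=w$; $L_{u,v}=L_{vu}^{-1}L_vL_u$. $\mathrm{Inn}(Q)$ is the group generated by $L_{x,y}$, $R_{x,y}=R_{xy}^{-1}R_yR_x$, $T_x=L_x^{-1}R_x$; an A-loop is a loop whose inner mappings are automorphisms. Nuclei: $N_\lambda=\{x:(xy)z=x(yz)\ \forall y,z\}$, $N_\mu=\{y:(xy)z=x(yz)\ \forall x,z\}$; $Z(Q)$ is the center. Powers are well defined as the loop is power-associative. *)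

theory Defs
  imports "HOL-Algebra.Algebra"
begin

definition is_loop :: "'a set \<Rightarrow> ('a \<Rightarrow> 'a \<Rightarrow> 'a) \<Rightarrow> 'a \<Rightarrow> bool" where
  "is_loop S m e \<longleftrightarrow> e \<in> S \<and> (\<forall>x\<in>S. \<forall>y\<in>S. m x y \<in> S)
     \<and> (\<forall>x\<in>S. m e x = x \<and> m x e = x)
     \<and> (\<forall>u\<in>S. \<forall>w\<in>S. \<exists>!z. z \<in> S \<and> m u z = w)
     \<and> (\<forall>u\<in>S. \<forall>w\<in>S. \<exists>!z. z \<in> S \<and> m z u = w)"

definition is_commutative :: "'a set \<Rightarrow> ('a \<Rightarrow> 'a \<Rightarrow> 'a) \<Rightarrow> bool" where
  "is_commutative S m \<longleftrightarrow> (\<forall>x\<in>S. \<forall>y\<in>S. m x y = m y x)"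

definition is_associative :: "'a set \<Rightarrow> ('a \<Rightarrow> 'a \<Rightarrow> 'a) \<Rightarrow> bool" where
  "is_associative S m \<longleftrightarrow> (\<forall>x\<in>S. \<forall>y\<in>S. \<forall>z\<in>S. m (m x y) z = m x (m y z))"

definition ldiv :: "'a set \<Rightarrow> ('a \<Rightarrow> 'a \<Rightarrow> 'a) \<Rightarrow> 'a \<Rightarrow> 'a \<Rightarrow> 'a" where
  "ldiv S m u w = (THE z. z \<in> S \<and> m u z = w)"

definition rdiv :: "'a set \<Rightarrow> ('a \<Rightarrow> 'a \<Rightarrow> 'a) \<Rightarrow> 'a \<Rightarrow> 'a \<Rightarrow> 'a" where
  "rdiv S m w u = (THE z. z \<in> S \<and> m z u = w)"

text \<open>Permutations of S are represented as functions that are the identity outside S.\<close>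
definition on_carrier :: "'a set \<Rightarrow> ('a \<Rightarrow> 'a) \<Rightarrow> 'a \<Rightarrow> 'a" where
  "on_carrier S f = (\<lambda>w. if w \<in> S then f w else w)"

definition Lmap :: "'a set \<Rightarrow> ('a \<Rightarrow> 'a \<Rightarrow> 'a) \<Rightarrow> 'a \<Rightarrow> 'a \<Rightarrow> 'a \<Rightarrow> 'a" where
  "Lmap S m u v = on_carrier S (\<lambda>w. ldiv S m (m v u) (m v (m u w)))"

definition Rmap :: "'a set \<Rightarrow> ('a \<Rightarrow> 'a \<Rightarrow> 'a) \<Rightarrow> 'a \<Rightarrow> 'a \<Rightarrow> 'a \<Rightarrow> 'a" where
  "Rmap S m u v = on_carrier S (\<lambda>w. rdiv S m (m (m w u) v) (m u v))"

definition Tmap :: "'a set \<Rightarrow> ('a \<Rightarrow> 'a \<Rightarrow> 'a) \<Rightarrow> 'a \<Rightarrow> 'a \<Rightarrow> 'a" where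
  "Tmap S m u = on_carrier S (\<lambda>w. ldiv S m u (m w u))"

inductive_set Inn :: "'a set \<Rightarrow> ('a \<Rightarrow> 'a \<Rightarrow> 'a) \<Rightarrow> ('a \<Rightarrow> 'a) set"
  for S m where
  Inn_id: "id \<in> Inn S m"
| Inn_L: "u \<in> S \<Longrightarrow> v \<in> S \<Longrightarrow> Lmap S m u v \<in> Inn S m"
| Inn_R: "u \<in> S \<Longrightarrow> v \<in> S \<Longrightarrow> Rmap S m u v \<in> Inn S m"
| Inn_T: "u \<in> S \<Longrightarrow> Tmap S m u \<in> Inn S m"
| Inn_comp: "f \<in> Inn S m \<Longrightarrow> g \<in> Inn S m \<Longrightarrow> f \<circ> g \<in> Inn S m"
| Inn_inv: "f \<in> Inn S m \<Longrightarrow> on_carrier S (inv_into S f) \<in> Inn S m"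

definition Inn_group :: "'a set \<Rightarrow> ('a \<Rightarrow> 'a \<Rightarrow> 'a) \<Rightarrow> ('a \<Rightarrow> 'a) monoid" where
  "Inn_group S m = \<lparr>carrier = Inn S m, monoid.mult = (\<circ>), one = id\<rparr>"

definition is_automorphism :: "'a set \<Rightarrow> ('a \<Rightarrow> 'a \<Rightarrow> 'a) \<Rightarrow> ('a \<Rightarrow> 'a) \<Rightarrow> bool" where
  "is_automorphism S m f \<longleftrightarrow> bij_betw f S S \<and> (\<forall>x\<in>S. \<forall>y\<in>S. f (m x y) = m (f x) (f y))"

definition is_A_loop :: "'a set \<Rightarrow> ('a \<Rightarrow> 'a \<Rightarrow> 'a) \<Rightarrow> 'a \<Rightarrow> bool" where
  "is_A_loop S m e \<longleftrightarrow> is_loop S m e \<and> (\<forall>f\<in>Inn S m. is_automorphism S m f)"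

definition left_nucleus :: "'a set \<Rightarrow> ('a \<Rightarrow> 'a \<Rightarrow> 'a) \<Rightarrow> 'a set" where
  "left_nucleus S m = {x \<in> S. \<forall>y\<in>S. \<forall>z\<in>S. m (m x y) z = m x (m y z)}"

definition middle_nucleus :: "'a set \<Rightarrow> ('a \<Rightarrow> 'a \<Rightarrow> 'a) \<Rightarrow> 'a set" where
  "middle_nucleus S m = {y \<in> S. \<forall>x\<in>S. \<forall>z\<in>S. m (m x y) z = m x (m y z)}"

definition right_nucleus :: "'a set \<Rightarrow> ('a \<Rightarrow> 'a \<Rightarrow> 'a) \<Rightarrow> 'a set" where
  "right_nucleus S m = {z \<in> S. \<forall>x\<in>S. \<forall>y\<in>S. m (m x y) z = m x (m y z)}"

definition loop_center :: "'a set \<Rightarrow> ('a \<Rightarrow> 'a \<Rightarrow> 'a) \<Rightarrow> 'a set" where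
  "loop_center S m = {x \<in> left_nucleus S m \<inter> middle_nucleus S m \<inter> right_nucleus S m.
                        \<forall>y\<in>S. m x y = m y x}"

definition lcoset :: "('a \<Rightarrow> 'a \<Rightarrow> 'a) \<Rightarrow> 'a \<Rightarrow> 'a set \<Rightarrow> 'a set" where
  "lcoset m x N = (\<lambda>z. m x z) ` N"

definition quotient_loop :: "'a set \<Rightarrow> ('a \<Rightarrow> 'a \<Rightarrow> 'a) \<Rightarrow> 'a \<Rightarrow> 'a set \<Rightarrow> 'a set monoid" where
  "quotient_loop S m e N =
     \<lparr>carrier = (\<lambda>x. lcoset m x N) ` S,
      monoid.mult = (\<lambda>A B. lcoset m (m (SOME x. x \<in> A) (SOME y. y \<in> B)) N),
      one = lcoset m e N\<rparr>"

primrec loop_pow :: "('a \<Rightarrow> 'a \<Rightarrow> 'a) \<Rightarrow> 'a \<Rightarrow> 'a \<Rightarrow> nat \<Rightarrow> 'a" where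
  "loop_pow m e x 0 = e"
| "loop_pow m e x (Suc k) = m x (loop_pow m e x k)"

text \<open>Z_n is identified with {0..<n} (as integers); arithmetic is taken mod n.\<close>
definition Zn :: "nat \<Rightarrow> int set" where
  "Zn n = {0..<int n}"

definition Qcar :: "nat \<Rightarrow> (int \<times> int \<times> int) set" where
  "Qcar n = Zn n \<times> Zn n \<times> Zn n"

definition ovf :: "nat \<Rightarrow> int \<Rightarrow> int \<Rightarrow> int" where
  "ovf n x y = (if x + y \<ge> int n then 1 else 0)"

definition Qmul :: "nat \<Rightarrow> int \<Rightarrow> int \<Rightarrow> int \<times> int \<times> int \<Rightarrow> int \<times> int \<times> int \<Rightarrow> int \<times> int \<times> int" where
  "Qmul n a b x y = (case x of (x1, x2, x3) \<Rightarrow> case y of (y1, y2, y3) \<Rightarrow>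
     ((x1 + y1 + ((x2 + y2) mod int n) * x3 * y3 + a * ovf n x2 y2 + b * ovf n x3 y3) mod int n,
      (x2 + y2) mod int n, (x3 + y3) mod int n))"

definition Qone :: "int \<times> int \<times> int" where
  "Qone = (0, 0, 0)"

end

theory Submission
  imports Defs
begin

text \<open>
  The last two coordinates of \<open>Q\<^sub>a\<^sub>,\<^sub>b(\<int>\<^sub>n)\<close> multiply as in \<open>\<int>\<^sub>n \<times> \<int>\<^sub>n\<close>, and the
  overflow terms \<open>a(x\<^sub>2,y\<^sub>2)\<^sub>n\<close>, \<open>b(x\<^sub>3,y\<^sub>3)\<^sub>n\<close> are carries, hence 2-cocycles, which never obstruct
  associativity. The only defect comes from the term \<open>(x\<^sub>2+y\<^sub>2)x\<^sub>3y\<^sub>3\<close>: one computes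
  \<open>x(yz) = (xy)\<sigma>(z)\<close>, where \<open>\<sigma>\<close> is the shear
  \<open>(z\<^sub>1,z\<^sub>2,z\<^sub>3) \<mapsto> (z\<^sub>1 + x\<^sub>3y\<^sub>3z\<^sub>2 - x\<^sub>2y\<^sub>3z\<^sub>3, z\<^sub>2, z\<^sub>3)\<close>.
  Shears are automorphisms of \<open>Q\<close> and compose by adding their two parameters, so they form
  a group isomorphic to \<open>\<int>\<^sub>n \<times> \<int>\<^sub>n\<close>. Since \<open>Q\<close> is commutative, \<open>R\<^sub>u\<^sub>,\<^sub>v = L\<^sub>u\<^sub>,\<^sub>v\<close> and
  \<open>T\<^sub>u = id\<close>, and \<open>L\<^sub>u\<^sub>,\<^sub>v\<close> is the shear with parameters \<open>(u\<^sub>3v\<^sub>3, -u\<^sub>3v\<^sub>2)\<close>; thus \<open>Inn(Q)\<close> is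
  exactly the group of shears and \<open>Q\<close> is an A-loop. Reading off when \<open>\<sigma>\<close> is the identity gives
  the associativity criterion \<open>n | y\<^sub>3(x\<^sub>3z\<^sub>2 - x\<^sub>2z\<^sub>3)\<close>, from which the nuclei and the center
  \<open>\<int>\<^sub>n \<times> 0 \<times> 0\<close> follow; the cosets of the center are the fibres of the projection onto the
  last two coordinates, so \<open>Q/Z(Q) \<cong> \<int>\<^sub>n \<times> \<int>\<^sub>n\<close> as well.
\<close>

section \<open>Residues and carries\<close>

lemma mod_mod_cong: "(a::int) mod n = a' mod n \<Longrightarrow> a mod n mod n = a' mod n"
  by simp

lemmas mod_strip_cong = mod_mod_cong mod_add_cong mod_diff_cong mod_mult_cong

text \<open>Residues of expressions that themselves contain residues, as loop products do, are compared
  by stripping every inner \<open>mod\<close> and proving the remaining ring identity: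
  \<open>rule mod_eq_stripI, (rule mod_strip_cong refl)+\<close>.\<close>
lemma mod_eq_stripI:
  "(p::int) mod n = p' mod n \<Longrightarrow> q mod n = q' mod n \<Longrightarrow> p' = q' \<Longrightarrow> p mod n = q mod n"
  by simp

lemma mem_Zn_iff: "x \<in> Zn n \<longleftrightarrow> 0 \<le> x \<and> x < int n"
  by (simp add: Zn_def)

lemma mem_Zn_imp_pos: "x \<in> Zn n \<Longrightarrow> 0 < n"
  by (simp add: Zn_def)

lemma mod_in_Zn: "0 < n \<Longrightarrow> x mod int n \<in> Zn n"
  by (simp add: mem_Zn_iff)

lemma mod_Zn: "x \<in> Zn n \<Longrightarrow> x mod int n = x"
  by (simp add: mem_Zn_iff)

lemma Zn_dvd_eq_0: "x \<in> Zn n \<Longrightarrow> int n dvd x \<Longrightarrow> x = 0"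
  by (metis mod_Zn dvd_imp_mod_0)

lemma fibre_eq_iff: "0 < n \<Longrightarrow> Zn n \<times> {r} = Zn n \<times> {r'} \<longleftrightarrow> r = r'"
  by (auto simp: times_eq_iff Zn_def)

lemma carrier_integer_mod_group_Zn: "0 < n \<Longrightarrow> carrier (integer_mod_group n) = Zn n"
  by (simp add: carrier_integer_mod_group Zn_def)

lemma ovf_commute: "ovf n x y = ovf n y x"
  by (simp add: ovf_def add.commute)

lemma ovf_zero_right: "x \<in> Zn n \<Longrightarrow> ovf n x 0 = 0"
  by (simp add: ovf_def mem_Zn_iff)

lemma ovf_eq_div: "x \<in> Zn n \<Longrightarrow> y \<in> Zn n \<Longrightarrow> ovf n x y = (x + y) div int n"
proof -
  assume "x \<in> Zn n" "y \<in> Zn n"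
  then have "0 \<le> x + y" "x + y < 2 * int n" by (auto simp: mem_Zn_iff)
  then show ?thesis
    by (auto simp: ovf_def div_pos_geq)
qed

lemma ovf_add_carry:
  assumes "x \<in> Zn n" "y \<in> Zn n" "z \<in> Zn n"
  shows "ovf n x y + ovf n ((x + y) mod int n) z = (x + y + z) div int n"
proof -
  have "0 < n" using assms(1) by (rule mem_Zn_imp_pos)
  then have xy: "(x + y) mod int n \<in> Zn n" by (rule mod_in_Zn)
  have "z div int n = 0" "z mod int n = z"
    using assms(3) by (simp_all add: mem_Zn_iff)
  then have "(x + y + z) div int n = (x + y) div int n + ((x + y) mod int n + z) div int n"
    using div_add1_eq[of "x + y" z "int n"] by simp
  also have "\<dots> = ovf n x y + ovf n ((x + y) mod int n) z"
    using assms xy by (simp add: ovf_eq_div)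
  finally show ?thesis by simp
qed

lemma ovf_cocycle:
  assumes "x \<in> Zn n" "y \<in> Zn n" "z \<in> Zn n"
  shows "ovf n x y + ovf n ((x + y) mod int n) z = ovf n y z + ovf n x ((y + z) mod int n)"
  using ovf_add_carry[OF assms] ovf_add_carry[OF assms(2,3,1)]
  by (simp add: ovf_commute add_ac)

section \<open>Commutative loops\<close>

lemma loop_ldiv_eqI:
  assumes "is_loop S m e" "u \<in> S" "z \<in> S" "m u z = w"
  shows "ldiv S m u w = z"
proof -
  have "w \<in> S"
    using assms by (auto simp: is_loop_def)
  then have "\<exists>!z. z \<in> S \<and> m u z = w"
    using assms(1,2) by (simp add: is_loop_def)
  then show ?thesis
    unfolding ldiv_def by (rule the1_equality) (simp add: assms(3,4))
qed

lemma rdiv_eq_ldiv_if_commutative: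
  "is_commutative S m \<Longrightarrow> u \<in> S \<Longrightarrow> rdiv S m w u = ldiv S m u w"
proof -
  assume "is_commutative S m" "u \<in> S"
  then have "(\<lambda>z. z \<in> S \<and> m z u = w) = (\<lambda>z. z \<in> S \<and> m u z = w)"
    by (auto simp: is_commutative_def)
  then show ?thesis
    by (simp add: rdiv_def ldiv_def)
qed

lemma Rmap_eq_Lmap_if_commutative:
  assumes loop: "is_loop S m e" and comm: "is_commutative S m" and "u \<in> S" "v \<in> S"
  shows "Rmap S m u v = Lmap S m u v"
proof -
  have "rdiv S m (m (m w u) v) (m u v) = ldiv S m (m v u) (m v (m u w))" if "w \<in> S" for w
  proof -
    have "m w u \<in> S" "m u v \<in> S"
      using loop that assms(3,4) by (auto simp: is_loop_def)
    then have "m (m w u) v = m v (m u w)" "m u v = m v u"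
      using comm that assms(3,4) unfolding is_commutative_def by metis+
    then show ?thesis
      using rdiv_eq_ldiv_if_commutative[OF comm \<open>m u v \<in> S\<close>] by simp
  qed
  then show ?thesis
    unfolding Rmap_def Lmap_def on_carrier_def by auto
qed

lemma Tmap_eq_id_if_commutative:
  assumes "is_loop S m e" "is_commutative S m" "u \<in> S"
  shows "Tmap S m u = id"
proof
  fix w
  show "Tmap S m u w = id w"
  proof (cases "w \<in> S")
    case True
    then have "ldiv S m u (m w u) = w"
      using assms by (intro loop_ldiv_eqI) (auto simp: is_commutative_def)
    then show ?thesis using True by (simp add: Tmap_def on_carrier_def)
  qed (simp add: Tmap_def on_carrier_def)
qed

lemma commutative_loopI:
  assumes "e \<in> S" and closed: "\<And>x y. x \<in> S \<Longrightarrow> y \<in> S \<Longrightarrow> m x y \<in> S"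
    and unit: "\<And>x. x \<in> S \<Longrightarrow> m e x = x" and comm: "is_commutative S m"
    and div_closed: "\<And>x y. x \<in> S \<Longrightarrow> y \<in> S \<Longrightarrow> d x y \<in> S"
    and mult_div: "\<And>x y. x \<in> S \<Longrightarrow> y \<in> S \<Longrightarrow> m x (d x y) = y"
    and div_mult: "\<And>x z. x \<in> S \<Longrightarrow> z \<in> S \<Longrightarrow> d x (m x z) = z"
  shows "is_loop S m e"
proof -
  have left: "\<exists>!z. z \<in> S \<and> m u z = w" if "u \<in> S" "w \<in> S" for u w
  proof
    show "d u w \<in> S \<and> m u (d u w) = w"
      using that div_closed mult_div by simp
    show "z = d u w" if "z \<in> S \<and> m u z = w" for z
      using that div_mult[OF \<open>u \<in> S\<close>, of z] by auto
  qed
  have right: "\<exists>!z. z \<in> S \<and> m z u = w" if "u \<in> S" "w \<in> S" for u w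
  proof -
    have "z \<in> S \<and> m z u = w \<longleftrightarrow> z \<in> S \<and> m u z = w" for z
      using comm that by (auto simp: is_commutative_def)
    then show ?thesis
      using left[OF that] by simp
  qed
  have unit_right: "m x e = x" if "x \<in> S" for x
    using comm unit[OF that] that \<open>e \<in> S\<close> by (simp add: is_commutative_def)
  show ?thesis
    unfolding is_loop_def
    by (intro conjI ballI) (simp_all add: \<open>e \<in> S\<close> closed unit unit_right left right)
qed

lemma two_mult_choose_two: "2 * (Suc k choose 2) = Suc k * k"
  by (induction k) (auto simp: numeral_2_eq_2)

lemma two_mult_choose_three_Suc:
  "2 * int (Suc (Suc k) choose 3) = 2 * int (Suc k choose 3) + int (Suc k) * int k"
proof -
  have "Suc (Suc k) choose 3 = (Suc k choose 2) + (Suc k choose 3)"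
    by (simp add: numeral_3_eq_3 numeral_2_eq_2)
  then have "2 * (Suc (Suc k) choose 3) = 2 * (Suc k choose 3) + Suc k * k"
    using two_mult_choose_two by simp
  then show ?thesis
    by (metis of_nat_add of_nat_mult of_nat_numeral)
qed

lemma sum_ovf_multiples_Suc:
  "x \<in> Zn n \<Longrightarrow> (\<Sum>j\<in>{1..<Suc k}. ovf n x ((int j * x) mod int n))
     = (\<Sum>j\<in>{1..<k}. ovf n x ((int j * x) mod int n)) + ovf n x ((int k * x) mod int n)"
  by (cases k) (simp_all add: ovf_zero_right)

section \<open>Shears\<close>

definition shear :: "nat \<Rightarrow> int \<Rightarrow> int \<Rightarrow> int \<times> int \<times> int \<Rightarrow> int \<times> int \<times> int" where
  "shear n \<alpha> \<beta> = on_carrier (Qcar n) (\<lambda>(w1, w2, w3). ((w1 + \<alpha> * w2 + \<beta> * w3) mod int n, w2, w3))"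

lemma mem_Qcar_iff: "(x1, x2, x3) \<in> Qcar n \<longleftrightarrow> x1 \<in> Zn n \<and> x2 \<in> Zn n \<and> x3 \<in> Zn n"
  by (simp add: Qcar_def)

lemma shear_apply:
  "(w1, w2, w3) \<in> Qcar n \<Longrightarrow> shear n \<alpha> \<beta> (w1, w2, w3) = ((w1 + \<alpha> * w2 + \<beta> * w3) mod int n, w2, w3)"
  by (simp add: shear_def on_carrier_def)

lemma shear_outside: "w \<notin> Qcar n \<Longrightarrow> shear n \<alpha> \<beta> w = w"
  by (simp add: shear_def on_carrier_def)

lemma shear_closed: "w \<in> Qcar n \<Longrightarrow> shear n \<alpha> \<beta> w \<in> Qcar n"
  by (cases w) (auto simp: shear_apply mem_Qcar_iff intro: mod_in_Zn dest: mem_Zn_imp_pos)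

lemma shear_comp: "shear n \<alpha> \<beta> \<circ> shear n \<gamma> \<delta> = shear n (\<alpha> + \<gamma>) (\<beta> + \<delta>)"
proof
  fix w :: "int \<times> int \<times> int"
  obtain w1 w2 w3 where w: "w = (w1, w2, w3)" by (cases w)
  show "(shear n \<alpha> \<beta> \<circ> shear n \<gamma> \<delta>) w = shear n (\<alpha> + \<gamma>) (\<beta> + \<delta>) w"
  proof (cases "w \<in> Qcar n")
    case True
    have "((w1 + \<gamma> * w2 + \<delta> * w3) mod int n + \<alpha> * w2 + \<beta> * w3) mod int n
        = (w1 + (\<alpha> + \<gamma>) * w2 + (\<beta> + \<delta>) * w3) mod int n"
      by (rule mod_eq_stripI, (rule mod_strip_cong refl)+) (simp add: algebra_simps)
    then show ?thesis
      using True shear_closed[OF True, of \<gamma> \<delta>] by (simp add: w shear_apply)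
  qed (simp add: shear_outside)
qed

lemma shear_zero: "shear n 0 0 = id"
proof
  fix w :: "int \<times> int \<times> int"
  obtain w1 w2 w3 where w: "w = (w1, w2, w3)" by (cases w)
  show "shear n 0 0 w = id w"
    by (cases "w \<in> Qcar n") (simp_all add: w shear_apply shear_outside mem_Qcar_iff mod_Zn)
qed

lemma shear_cong:
  "\<alpha> mod int n = \<gamma> mod int n \<Longrightarrow> \<beta> mod int n = \<delta> mod int n \<Longrightarrow> shear n \<alpha> \<beta> = shear n \<gamma> \<delta>"
  unfolding shear_def by (intro arg_cong[where f = "on_carrier _"] ext) (auto intro: mod_add_cong mod_mult_cong)

lemma shear_mod: "shear n (\<alpha> mod int n) (\<beta> mod int n) = shear n \<alpha> \<beta>"
  by (rule shear_cong) simp_all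

lemma shear_eq_iff:
  assumes "2 \<le> n"
  shows "shear n \<alpha> \<beta> = shear n \<gamma> \<delta> \<longleftrightarrow> \<alpha> mod int n = \<gamma> mod int n \<and> \<beta> mod int n = \<delta> mod int n"
proof
  have "(0, 1, 0) \<in> Qcar n" "(0, 0, 1) \<in> Qcar n"
    using assms by (auto simp: mem_Qcar_iff mem_Zn_iff)
  then have coeffs: "shear n \<alpha>' \<beta>' (0, 1, 0) = (\<alpha>' mod int n, 1, 0)"
    "shear n \<alpha>' \<beta>' (0, 0, 1) = (\<beta>' mod int n, 0, 1)" for \<alpha>' \<beta>'
    by (simp_all add: shear_apply)
  assume "shear n \<alpha> \<beta> = shear n \<gamma> \<delta>"
  then have "shear n \<alpha> \<beta> (0, 1, 0) = shear n \<gamma> \<delta> (0, 1, 0)"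
    "shear n \<alpha> \<beta> (0, 0, 1) = shear n \<gamma> \<delta> (0, 0, 1)"
    by simp_all
  then show "\<alpha> mod int n = \<gamma> mod int n \<and> \<beta> mod int n = \<delta> mod int n"
    unfolding coeffs by simp
qed (auto intro: shear_cong)

lemma bij_shear: "bij_betw (shear n \<alpha> \<beta>) (Qcar n) (Qcar n)"
proof (rule bij_betwI)
  have inverse: "shear n (- \<alpha>) (- \<beta>) (shear n \<alpha> \<beta> w) = w" "shear n \<alpha> \<beta> (shear n (- \<alpha>) (- \<beta>) w) = w" for w
    using fun_cong[OF shear_comp[of n "- \<alpha>" "- \<beta>" \<alpha> \<beta>], of w]
      fun_cong[OF shear_comp[of n \<alpha> \<beta> "- \<alpha>" "- \<beta>"], of w]
    by (simp_all add: shear_zero)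
  show "shear n \<alpha> \<beta> \<in> Qcar n \<rightarrow> Qcar n" "shear n (- \<alpha>) (- \<beta>) \<in> Qcar n \<rightarrow> Qcar n"
    using shear_closed by blast+
  show "\<And>w. shear n (- \<alpha>) (- \<beta>) (shear n \<alpha> \<beta> w) = w" "\<And>w. shear n \<alpha> \<beta> (shear n (- \<alpha>) (- \<beta>) w) = w"
    by (rule inverse)+
qed

lemma on_carrier_inv_shear: "on_carrier (Qcar n) (inv_into (Qcar n) (shear n \<alpha> \<beta>)) = shear n (- \<alpha>) (- \<beta>)"
proof
  fix w
  show "on_carrier (Qcar n) (inv_into (Qcar n) (shear n \<alpha> \<beta>)) w = shear n (- \<alpha>) (- \<beta>) w"
  proof (cases "w \<in> Qcar n")
    case True
    have "shear n \<alpha> \<beta> (shear n (- \<alpha>) (- \<beta>) w) = w"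
      using fun_cong[OF shear_comp[of n \<alpha> \<beta> "- \<alpha>" "- \<beta>"], of w] by (simp add: shear_zero)
    then have "inv_into (Qcar n) (shear n \<alpha> \<beta>) w = shear n (- \<alpha>) (- \<beta>) w"
      using bij_shear[of n \<alpha> \<beta>] shear_closed[OF True] by (metis bij_betw_imp_inj_on inv_into_f_f)
    then show ?thesis
      using True by (simp add: on_carrier_def)
  qed (simp add: on_carrier_def shear_outside)
qed

lemma shear_Qmul:
  assumes "x \<in> Qcar n" "y \<in> Qcar n"
  shows "shear n \<alpha> \<beta> (Qmul n a b x y) = Qmul n a b (shear n \<alpha> \<beta> x) (shear n \<alpha> \<beta> y)"
proof -
  obtain x1 x2 x3 y1 y2 y3 where xy: "x = (x1, x2, x3)" "y = (y1, y2, y3)"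
    by (cases x, cases y)
  have "((x1 + y1 + ((x2 + y2) mod int n) * x3 * y3 + a * ovf n x2 y2 + b * ovf n x3 y3) mod int n
         + \<alpha> * ((x2 + y2) mod int n) + \<beta> * ((x3 + y3) mod int n)) mod int n
      = ((x1 + \<alpha> * x2 + \<beta> * x3) mod int n + (y1 + \<alpha> * y2 + \<beta> * y3) mod int n
         + ((x2 + y2) mod int n) * x3 * y3 + a * ovf n x2 y2 + b * ovf n x3 y3) mod int n"
    by (rule mod_eq_stripI, (rule mod_strip_cong refl)+) (simp add: algebra_simps)
  moreover have "Qmul n a b x y \<in> Qcar n"
    using assms by (auto simp: xy Qmul_def mem_Qcar_iff intro: mod_in_Zn dest: mem_Zn_imp_pos)
  ultimately show ?thesis
    using assms by (simp add: xy shear_apply Qmul_def)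
qed

lemma automorphism_shear: "is_automorphism (Qcar n) (Qmul n a b) (shear n \<alpha> \<beta>)"
  unfolding is_automorphism_def using bij_shear shear_Qmul by blast

section \<open>The loop \<open>Q\<^sub>a\<^sub>,\<^sub>b(\<int>\<^sub>n)\<close>\<close>

definition Qldiv :: "nat \<Rightarrow> int \<Rightarrow> int \<Rightarrow> int \<times> int \<times> int \<Rightarrow> int \<times> int \<times> int \<Rightarrow> int \<times> int \<times> int" where
  "Qldiv n a b x y = (case x of (x1, x2, x3) \<Rightarrow> case y of (y1, y2, y3) \<Rightarrow>
     ((y1 - x1 - ((y3 - x3) mod int n) * x3 * y2 - a * ovf n x2 ((y2 - x2) mod int n)
         - b * ovf n x3 ((y3 - x3) mod int n)) mod int n,
      (y2 - x2) mod int n, (y3 - x3) mod int n))"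

locale Qab =
  fixes n :: nat and a b :: int
begin

abbreviation "S \<equiv> Qcar n"
abbreviation "M \<equiv> Qmul n a b"

lemma M_eq:
  "M (x1, x2, x3) (y1, y2, y3) =
     ((x1 + y1 + ((x2 + y2) mod int n) * x3 * y3 + a * ovf n x2 y2 + b * ovf n x3 y3) mod int n,
      (x2 + y2) mod int n, (x3 + y3) mod int n)"
  by (simp add: Qmul_def)

lemma M_closed: "x \<in> S \<Longrightarrow> y \<in> S \<Longrightarrow> M x y \<in> S"
  by (cases x, cases y) (auto simp: M_eq mem_Qcar_iff intro: mod_in_Zn dest: mem_Zn_imp_pos)

lemma M_commute: "M x y = M y x"
  by (cases x, cases y) (simp add: M_eq ovf_commute ac_simps)

lemma Qone_M: "x \<in> S \<Longrightarrow> M Qone x = x"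
  by (cases x) (simp add: Qone_def M_eq mem_Qcar_iff mod_Zn ovf_commute[of n 0] ovf_zero_right)

lemma Qldiv_closed: "x \<in> S \<Longrightarrow> y \<in> S \<Longrightarrow> Qldiv n a b x y \<in> S"
  by (cases x, cases y) (auto simp: Qldiv_def mem_Qcar_iff intro: mod_in_Zn dest: mem_Zn_imp_pos)

lemma M_Qldiv:
  assumes "(x1, x2, x3) \<in> S" "(y1, y2, y3) \<in> S"
  shows "M (x1, x2, x3) (Qldiv n a b (x1, x2, x3) (y1, y2, y3)) = (y1, y2, y3)"
proof -
  define d2 d3 where "d2 = (y2 - x2) mod int n" and "d3 = (y3 - x3) mod int n"
  have y: "y1 \<in> Zn n" "y2 \<in> Zn n" "y3 \<in> Zn n"
    using assms(2) by (simp_all add: mem_Qcar_iff)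
  then have "(x2 + d2) mod int n = y2" "(x3 + d3) mod int n = y3"
    by (simp_all add: d2_def d3_def mod_Zn mod_simps)
  moreover have "(x1 + (y1 - x1 - d3 * x3 * y2 - a * ovf n x2 d2 - b * ovf n x3 d3) mod int n
      + y2 * x3 * d3 + a * ovf n x2 d2 + b * ovf n x3 d3) mod int n = y1 mod int n"
    by (rule mod_eq_stripI, (rule mod_strip_cong refl)+) (simp add: algebra_simps)
  ultimately show ?thesis
    using y by (simp add: M_eq Qldiv_def mod_Zn flip: d2_def d3_def)
qed

lemma Qldiv_M:
  assumes "(x1, x2, x3) \<in> S" "(z1, z2, z3) \<in> S"
  shows "Qldiv n a b (x1, x2, x3) (M (x1, x2, x3) (z1, z2, z3)) = (z1, z2, z3)"
proof -
  define s2 s3 where "s2 = (x2 + z2) mod int n" and "s3 = (x3 + z3) mod int n"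
  have z: "z1 \<in> Zn n" "z2 \<in> Zn n" "z3 \<in> Zn n"
    using assms(2) by (simp_all add: mem_Qcar_iff)
  then have "(s2 - x2) mod int n = z2" "(s3 - x3) mod int n = z3"
    by (simp_all add: s2_def s3_def mod_Zn mod_simps)
  moreover have "((x1 + z1 + s2 * x3 * z3 + a * ovf n x2 z2 + b * ovf n x3 z3) mod int n
      - x1 - z3 * x3 * s2 - a * ovf n x2 z2 - b * ovf n x3 z3) mod int n = z1 mod int n"
    by (rule mod_eq_stripI, (rule mod_strip_cong refl)+) (simp add: algebra_simps)
  ultimately show ?thesis
    using z by (simp add: M_eq Qldiv_def mod_Zn flip: s2_def s3_def)
qed

lemma M_cancel_left:
  assumes "x \<in> S" "z \<in> S" "z' \<in> S"
  shows "M x z = M x z' \<longleftrightarrow> z = z'"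
proof
  obtain x1 x2 x3 z1 z2 z3 z1' z2' z3' where "x = (x1, x2, x3)" "z = (z1, z2, z3)" "z' = (z1', z2', z3')"
    by (cases x, cases z, cases z')
  then show "z = z'" if "M x z = M x z'"
    using that assms Qldiv_M by metis
qed simp

lemma card_Q: "card S = n ^ 3"
  by (simp add: Qcar_def Zn_def card_cartesian_product power3_eq_cube)

lemma is_commutative_Q: "is_commutative S M"
  by (simp add: is_commutative_def M_commute)

lemma is_loop_Q:
  assumes "0 < n"
  shows "is_loop S M Qone"
proof (rule commutative_loopI[where d = "Qldiv n a b"])
  show "Qone \<in> S"
    using assms by (simp add: Qone_def mem_Qcar_iff mem_Zn_iff)
qed (auto simp: M_closed Qone_M is_commutative_Q Qldiv_closed M_Qldiv Qldiv_M)

lemma M_assoc_shear: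
  assumes x: "(x1, x2, x3) \<in> S" and y: "(y1, y2, y3) \<in> S" and z: "(z1, z2, z3) \<in> S"
  shows "M (x1, x2, x3) (M (y1, y2, y3) (z1, z2, z3))
       = M (M (x1, x2, x3) (y1, y2, y3)) (shear n (x3 * y3) (- (x2 * y3)) (z1, z2, z3))"
proof -
  have weighted_carries:
    "a * ovf n x2 y2 + a * ovf n ((x2 + y2) mod int n) z2 = a * ovf n y2 z2 + a * ovf n x2 ((y2 + z2) mod int n)"
    "b * ovf n x3 y3 + b * ovf n ((x3 + y3) mod int n) z3 = b * ovf n y3 z3 + b * ovf n x3 ((y3 + z3) mod int n)"
    using x y z by (simp_all add: mem_Qcar_iff ovf_cocycle flip: distrib_left)
  have first:
    "(x1 + (y1 + z1 + ((y2 + z2) mod int n) * y3 * z3 + a * ovf n y2 z2 + b * ovf n y3 z3) mod int n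
       + ((x2 + (y2 + z2) mod int n) mod int n) * x3 * ((y3 + z3) mod int n)
       + a * ovf n x2 ((y2 + z2) mod int n) + b * ovf n x3 ((y3 + z3) mod int n)) mod int n
     = ((x1 + y1 + ((x2 + y2) mod int n) * x3 * y3 + a * ovf n x2 y2 + b * ovf n x3 y3) mod int n
       + (z1 + x3 * y3 * z2 + - (x2 * y3) * z3) mod int n
       + (((x2 + y2) mod int n + z2) mod int n) * ((x3 + y3) mod int n) * z3
       + a * ovf n ((x2 + y2) mod int n) z2 + b * ovf n ((x3 + y3) mod int n) z3) mod int n"
    by (rule mod_eq_stripI, (rule mod_strip_cong refl)+) (use weighted_carries in \<open>simp add: algebra_simps\<close>)
  have "(x2 + (y2 + z2) mod int n) mod int n = ((x2 + y2) mod int n + z2) mod int n"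
    "(x3 + (y3 + z3) mod int n) mod int n = ((x3 + y3) mod int n + z3) mod int n"
    by (simp_all add: mod_simps ac_simps)
  with first z show ?thesis
    by (simp add: M_eq shear_apply)
qed

lemma ldiv_eq_Qldiv:
  assumes "0 < n" "x \<in> S" "y \<in> S"
  shows "ldiv S M x y = Qldiv n a b x y"
proof (rule loop_ldiv_eqI[OF is_loop_Q[OF \<open>0 < n\<close>] \<open>x \<in> S\<close>])
  obtain x1 x2 x3 y1 y2 y3 where "x = (x1, x2, x3)" "y = (y1, y2, y3)"
    by (cases x, cases y)
  then show "M x (Qldiv n a b x y) = y"
    using assms M_Qldiv by simp
qed (simp add: assms Qldiv_closed)

lemma assoc_iff:
  assumes x: "(x1, x2, x3) \<in> S" and y: "(y1, y2, y3) \<in> S" and z: "(z1, z2, z3) \<in> S"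
  shows "M (M (x1, x2, x3) (y1, y2, y3)) (z1, z2, z3) = M (x1, x2, x3) (M (y1, y2, y3) (z1, z2, z3))
     \<longleftrightarrow> int n dvd y3 * (x3 * z2 - x2 * z3)"
proof -
  have "z1 \<in> Zn n"
    using z by (simp add: mem_Qcar_iff)
  have "M (M (x1, x2, x3) (y1, y2, y3)) (z1, z2, z3) = M (x1, x2, x3) (M (y1, y2, y3) (z1, z2, z3))
     \<longleftrightarrow> (z1, z2, z3) = shear n (x3 * y3) (- (x2 * y3)) (z1, z2, z3)"
    unfolding M_assoc_shear[OF x y z]
    by (intro M_cancel_left M_closed shear_closed x y z)
  also have "\<dots> \<longleftrightarrow> z1 mod int n = (z1 + y3 * (x3 * z2 - x2 * z3)) mod int n"
    using z \<open>z1 \<in> Zn n\<close> by (simp add: shear_apply mod_Zn algebra_simps)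
  also have "\<dots> \<longleftrightarrow> int n dvd y3 * (x3 * z2 - x2 * z3)"
    by (simp add: mod_eq_dvd_iff)
  finally show ?thesis .
qed

lemma ldiv_assoc:
  assumes "0 < n" and x: "(x1, x2, x3) \<in> S" and y: "(y1, y2, y3) \<in> S" and z: "z \<in> S"
  shows "ldiv S M (M (x1, x2, x3) (y1, y2, y3)) (M (x1, x2, x3) (M (y1, y2, y3) z))
       = shear n (x3 * y3) (- (x2 * y3)) z"
proof (rule loop_ldiv_eqI[OF is_loop_Q[OF \<open>0 < n\<close>]])
  obtain z1 z2 z3 where "z = (z1, z2, z3)"
    by (cases z)
  then show "M (M (x1, x2, x3) (y1, y2, y3)) (shear n (x3 * y3) (- (x2 * y3)) z)
      = M (x1, x2, x3) (M (y1, y2, y3) z)"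
    using M_assoc_shear x y z by simp
qed (simp_all add: M_closed shear_closed x y z)

lemma Lmap_eq_shear:
  assumes "0 < n" and u: "(u1, u2, u3) \<in> S" and v: "(v1, v2, v3) \<in> S"
  shows "Lmap S M (u1, u2, u3) (v1, v2, v3) = shear n (v3 * u3) (- (v2 * u3))"
proof
  fix w
  show "Lmap S M (u1, u2, u3) (v1, v2, v3) w = shear n (v3 * u3) (- (v2 * u3)) w"
    using ldiv_assoc[OF assms(1) v u] by (cases "w \<in> S") (simp_all add: Lmap_def on_carrier_def shear_outside)
qed

lemma Lmap_is_shear:
  assumes "0 < n" "u \<in> S" "v \<in> S"
  shows "\<exists>\<alpha> \<beta>. Lmap S M u v = shear n \<alpha> \<beta>"
proof -
  obtain u1 u2 u3 v1 v2 v3 where uv: "u = (u1, u2, u3)" "v = (v1, v2, v3)"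
    by (cases u, cases v)
  show ?thesis
    using Lmap_eq_shear[OF assms(1)] assms(2,3) unfolding uv by blast
qed

lemma Inn_imp_shear:
  assumes "0 < n" "f \<in> Inn S M"
  shows "\<exists>\<alpha> \<beta>. f = shear n \<alpha> \<beta>"
  using assms(2)
proof (induction rule: Inn.induct)
  case Inn_id
  show ?case using shear_zero[symmetric] by blast
next
  case (Inn_L u v)
  then show ?case by (rule Lmap_is_shear[OF assms(1)])
next
  case (Inn_R u v)
  then have "Rmap S M u v = Lmap S M u v"
    by (rule Rmap_eq_Lmap_if_commutative[OF is_loop_Q[OF assms(1)] is_commutative_Q])
  then show ?case
    using Lmap_is_shear[OF assms(1) Inn_R] by simp
next
  case (Inn_T u)
  then have "Tmap S M u = shear n 0 0"
    unfolding shear_zero by (rule Tmap_eq_id_if_commutative[OF is_loop_Q[OF assms(1)] is_commutative_Q])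
  then show ?case by blast
next
  case (Inn_comp f g)
  then obtain \<alpha> \<beta> \<gamma> \<delta> where "f = shear n \<alpha> \<beta>" "g = shear n \<gamma> \<delta>"
    by blast
  then have "f \<circ> g = shear n (\<alpha> + \<gamma>) (\<beta> + \<delta>)"
    by (simp add: shear_comp)
  then show ?case by blast
next
  case (Inn_inv f)
  then obtain \<alpha> \<beta> where "f = shear n \<alpha> \<beta>"
    by blast
  then have "on_carrier S (inv_into S f) = shear n (- \<alpha>) (- \<beta>)"
    by (simp add: on_carrier_inv_shear)
  then show ?case by blast
qed

lemma loop_pow_Q:
  assumes x: "(x1, x2, x3) \<in> S"
  shows "loop_pow M Qone (x1, x2, x3) k =
     ((int k * x1 + 2 * int ((k + 1) choose 3) * x2 * x3 ^ 2
         + a * (\<Sum>j\<in>{1..<k}. ovf n x2 ((int j * x2) mod int n))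
         + b * (\<Sum>j\<in>{1..<k}. ovf n x3 ((int j * x3) mod int n))) mod int n,
      (int k * x2) mod int n, (int k * x3) mod int n)"
proof (induction k)
  case 0
  then show ?case by (simp add: Qone_def numeral_3_eq_3)
next
  case (Suc k)
  have x23: "x2 \<in> Zn n" "x3 \<in> Zn n"
    using x by (simp_all add: mem_Qcar_iff)
  define s2 s3 where "s2 = (\<Sum>j\<in>{1..<k}. ovf n x2 ((int j * x2) mod int n))"
    and "s3 = (\<Sum>j\<in>{1..<k}. ovf n x3 ((int j * x3) mod int n))"
  define o2 o3 where "o2 = ovf n x2 ((int k * x2) mod int n)" and "o3 = ovf n x3 ((int k * x3) mod int n)"
  define C where "C = int (Suc k choose 3)"
  have sum2: "(\<Sum>j\<in>{1..<Suc k}. ovf n x2 ((int j * x2) mod int n)) = s2 + o2"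
    unfolding s2_def o2_def by (rule sum_ovf_multiples_Suc[OF x23(1)])
  have sum3: "(\<Sum>j\<in>{1..<Suc k}. ovf n x3 ((int j * x3) mod int n)) = s3 + o3"
    unfolding s3_def o3_def by (rule sum_ovf_multiples_Suc[OF x23(2)])
  have binomial: "2 * int (Suc k + 1 choose 3) = 2 * C + int (Suc k) * int k"
    unfolding C_def using two_mult_choose_three_Suc by simp
  have first:
    "(x1 + (int k * x1 + 2 * C * x2 * x3 ^ 2 + a * s2 + b * s3) mod int n
        + (((int k + 1) * x2) mod int n) * x3 * ((int k * x3) mod int n) + a * o2 + b * o3) mod int n
      = ((int k + 1) * x1 + (2 * C + (int k + 1) * int k) * x2 * x3 ^ 2 + a * (s2 + o2) + b * (s3 + o3)) mod int n"
    by (rule mod_eq_stripI, (rule mod_strip_cong refl)+) (simp add: algebra_simps power2_eq_square)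
  have last: "(x2 + (int k * x2) mod int n) mod int n = ((int k + 1) * x2) mod int n"
    "(x3 + (int k * x3) mod int n) mod int n = ((int k + 1) * x3) mod int n"
    by (simp_all add: mod_simps algebra_simps)
  have "loop_pow M Qone (x1, x2, x3) (Suc k)
      = M (x1, x2, x3) ((int k * x1 + 2 * C * x2 * x3 ^ 2 + a * s2 + b * s3) mod int n,
                        (int k * x2) mod int n, (int k * x3) mod int n)"
    using Suc.IH by (simp add: C_def s2_def s3_def)
  also have "\<dots> = (((int k + 1) * x1 + (2 * C + (int k + 1) * int k) * x2 * x3 ^ 2
                      + a * (s2 + o2) + b * (s3 + o3)) mod int n,
                    ((int k + 1) * x2) mod int n, ((int k + 1) * x3) mod int n)"
    unfolding M_eq o2_def[symmetric] o3_def[symmetric] last first ..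
  finally show ?case
    unfolding sum2 sum3 binomial by (simp add: algebra_simps)
qed

end

section \<open>Inner mappings, nuclei and the quotient by the center\<close>

locale Qab_ge2 = Qab +
  assumes two_le_n: "2 \<le> n"
begin

lemma n_pos: "0 < n"
  using two_le_n by simp

lemma basis_in_S: "(0, 1, 0) \<in> S" "(0, 0, 1) \<in> S"
  using two_le_n by (auto simp: mem_Qcar_iff mem_Zn_iff)

lemma shear_is_Lmap: "\<exists>u\<in>S. \<exists>v\<in>S. shear n \<alpha> \<beta> = Lmap S M u v"
proof (intro bexI)
  show v: "(0, (- \<beta>) mod int n, \<alpha> mod int n) \<in> S"
    using n_pos by (auto simp: mem_Qcar_iff mem_Zn_iff)
  have "Lmap S M (0, 0, 1) (0, (- \<beta>) mod int n, \<alpha> mod int n)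
      = shear n (\<alpha> mod int n) (- ((- \<beta>) mod int n))"
    using Lmap_eq_shear[OF n_pos basis_in_S(2) v] by simp
  also have "\<dots> = shear n \<alpha> \<beta>"
    by (rule shear_cong) (simp_all add: mod_simps)
  finally show "shear n \<alpha> \<beta> = Lmap S M (0, 0, 1) (0, (- \<beta>) mod int n, \<alpha> mod int n)" ..
qed (rule basis_in_S)

lemma shear_in_Inn: "shear n \<alpha> \<beta> \<in> Inn S M"
proof -
  obtain u v where "u \<in> S" "v \<in> S" "shear n \<alpha> \<beta> = Lmap S M u v"
    using shear_is_Lmap by blast
  then show ?thesis
    by (simp add: Inn.Inn_L)
qed

lemma Inn_eq_shears: "Inn S M = (\<lambda>(\<alpha>, \<beta>). shear n \<alpha> \<beta>) ` (Zn n \<times> Zn n)"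
proof
  show "Inn S M \<subseteq> (\<lambda>(\<alpha>, \<beta>). shear n \<alpha> \<beta>) ` (Zn n \<times> Zn n)"
  proof
    fix f assume "f \<in> Inn S M"
    then obtain \<alpha> \<beta> where "f = shear n (\<alpha> mod int n) (\<beta> mod int n)"
      using Inn_imp_shear[OF n_pos] shear_mod by metis
    then show "f \<in> (\<lambda>(\<alpha>, \<beta>). shear n \<alpha> \<beta>) ` (Zn n \<times> Zn n)"
      using n_pos by (auto intro: mod_in_Zn)
  qed
  show "(\<lambda>(\<alpha>, \<beta>). shear n \<alpha> \<beta>) ` (Zn n \<times> Zn n) \<subseteq> Inn S M"
    using shear_in_Inn by auto
qed

lemma Inn_eq_Lmaps: "Inn S M = {Lmap S M u v | u v. u \<in> S \<and> v \<in> S}"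
proof
  show "Inn S M \<subseteq> {Lmap S M u v | u v. u \<in> S \<and> v \<in> S}"
  proof
    fix f assume "f \<in> Inn S M"
    then obtain \<alpha> \<beta> where "f = shear n \<alpha> \<beta>"
      using Inn_imp_shear[OF n_pos] by blast
    moreover obtain u v where "u \<in> S" "v \<in> S" "shear n \<alpha> \<beta> = Lmap S M u v"
      using shear_is_Lmap by blast
    ultimately show "f \<in> {Lmap S M u v | u v. u \<in> S \<and> v \<in> S}"
      by blast
  qed
qed (auto intro: Inn.Inn_L)

lemma is_A_loop_Q: "is_A_loop S M Qone"
  unfolding is_A_loop_def
  using is_loop_Q[OF n_pos] Inn_imp_shear[OF n_pos] automorphism_shear by blast

lemma not_associative_Q: "\<not> is_associative S M"
proof
  assume "is_associative S M"
  then have "M (M (0, 0, 1) (0, 0, 1)) (0, 1, 0) = M (0, 0, 1) (M (0, 0, 1) (0, 1, 0))"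
    using basis_in_S unfolding is_associative_def by blast
  then have "int n dvd 1"
    using assoc_iff[OF basis_in_S(2) basis_in_S(2) basis_in_S(1)] by simp
  then show False
    using two_le_n by simp
qed

lemma left_nucleus_Q: "left_nucleus S M = Zn n \<times> {0} \<times> {0}"
proof (intro Set.set_eqI iffI)
  fix x :: "int \<times> int \<times> int"
  assume x: "x \<in> left_nucleus S M"
  obtain x1 x2 x3 where x_eq: "x = (x1, x2, x3)" by (cases x)
  have xS: "(x1, x2, x3) \<in> S" and assoc: "\<forall>y\<in>S. \<forall>z\<in>S. M (M x y) z = M x (M y z)"
    using x by (auto simp: left_nucleus_def x_eq)
  have "int n dvd x3" "int n dvd x2"
    using assoc basis_in_S assoc_iff[OF xS basis_in_S(2) basis_in_S(1)]
      assoc_iff[OF xS basis_in_S(2) basis_in_S(2)] by (simp_all add: x_eq)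
  then show "x \<in> Zn n \<times> {0} \<times> {0}"
    using xS Zn_dvd_eq_0 by (auto simp: x_eq mem_Qcar_iff)
next
  fix x :: "int \<times> int \<times> int"
  assume "x \<in> Zn n \<times> {0} \<times> {0}"
  then obtain x1 where x: "x = (x1, 0, 0)" and xS: "(x1, 0, 0) \<in> S"
    using n_pos by (auto simp: mem_Qcar_iff mem_Zn_iff)
  have "M (M x y) z = M x (M y z)" if "y \<in> S" "z \<in> S" for y z
    using assoc_iff[OF xS] that by (cases y, cases z) (simp add: x)
  then show "x \<in> left_nucleus S M"
    using xS by (simp add: left_nucleus_def x)
qed

lemma middle_nucleus_Q: "middle_nucleus S M = Zn n \<times> Zn n \<times> {0}"
proof (intro Set.set_eqI iffI)
  fix y :: "int \<times> int \<times> int"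
  assume y: "y \<in> middle_nucleus S M"
  obtain y1 y2 y3 where y_eq: "y = (y1, y2, y3)" by (cases y)
  have yS: "(y1, y2, y3) \<in> S" and assoc: "\<forall>x\<in>S. \<forall>z\<in>S. M (M x y) z = M x (M y z)"
    using y by (auto simp: middle_nucleus_def y_eq)
  have "int n dvd y3"
    using assoc basis_in_S assoc_iff[OF basis_in_S(2) yS basis_in_S(1)] by (simp add: y_eq)
  then show "y \<in> Zn n \<times> Zn n \<times> {0}"
    using yS Zn_dvd_eq_0 by (auto simp: y_eq mem_Qcar_iff)
next
  fix y :: "int \<times> int \<times> int"
  assume "y \<in> Zn n \<times> Zn n \<times> {0}"
  then obtain y1 y2 where y: "y = (y1, y2, 0)" and yS: "(y1, y2, 0) \<in> S"
    using n_pos by (auto simp: mem_Qcar_iff mem_Zn_iff)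
  have "M (M x y) z = M x (M y z)" if "x \<in> S" "z \<in> S" for x z
    using assoc_iff[OF _ yS] that by (cases x, cases z) (simp add: y)
  then show "y \<in> middle_nucleus S M"
    using yS by (simp add: middle_nucleus_def y)
qed

lemma right_nucleus_Q: "right_nucleus S M = Zn n \<times> {0} \<times> {0}"
proof (intro Set.set_eqI iffI)
  fix z :: "int \<times> int \<times> int"
  assume z: "z \<in> right_nucleus S M"
  obtain z1 z2 z3 where z_eq: "z = (z1, z2, z3)" by (cases z)
  have zS: "(z1, z2, z3) \<in> S" and assoc: "\<forall>x\<in>S. \<forall>y\<in>S. M (M x y) z = M x (M y z)"
    using z by (auto simp: right_nucleus_def z_eq)
  have "int n dvd z2" "int n dvd z3"
    using assoc basis_in_S assoc_iff[OF basis_in_S(2) basis_in_S(2) zS]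
      assoc_iff[OF basis_in_S(1) basis_in_S(2) zS] by (simp_all add: z_eq)
  then show "z \<in> Zn n \<times> {0} \<times> {0}"
    using zS Zn_dvd_eq_0 by (auto simp: z_eq mem_Qcar_iff)
next
  fix z :: "int \<times> int \<times> int"
  assume "z \<in> Zn n \<times> {0} \<times> {0}"
  then obtain z1 where z: "z = (z1, 0, 0)" and zS: "(z1, 0, 0) \<in> S"
    using n_pos by (auto simp: mem_Qcar_iff mem_Zn_iff)
  have "M (M x y) z = M x (M y z)" if "x \<in> S" "y \<in> S" for x y
    using assoc_iff[OF _ _ zS] that by (cases x, cases y) (simp add: z)
  then show "z \<in> right_nucleus S M"
    using zS by (simp add: right_nucleus_def z)
qed

lemma loop_center_Q: "loop_center S M = Zn n \<times> {0} \<times> {0}"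
proof -
  have "Zn n \<times> {0} \<times> {0} \<subseteq> Zn n \<times> Zn n \<times> {0}"
    using n_pos by (auto simp: mem_Zn_iff)
  then show ?thesis
    unfolding loop_center_def left_nucleus_Q middle_nucleus_Q right_nucleus_Q
    by (auto simp: M_commute)
qed

text \<open>The center \<open>Zn n \<times> {0} \<times> {0}\<close> is written in its simp normal form.\<close>
abbreviation "Z0 \<equiv> Zn n \<times> {(0::int, 0::int)}"
abbreviation "Q_mod_Z0 \<equiv> quotient_loop S M Qone Z0"
abbreviation "Zn2 \<equiv> integer_mod_group n \<times>\<times> integer_mod_group n"

lemma carrier_Zn2: "carrier Zn2 = Zn n \<times> Zn n"
  by (simp add: carrier_integer_mod_group_Zn n_pos)

lemma lcoset_Z0:
  assumes "(x1, x2, x3) \<in> S"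
  shows "lcoset M (x1, x2, x3) Z0 = Zn n \<times> {(x2, x3)}"
proof -
  have x: "x1 \<in> Zn n" "x2 \<in> Zn n" "x3 \<in> Zn n"
    using assms by (simp_all add: mem_Qcar_iff)
  then have shift: "M (x1, x2, x3) (t, 0, 0) = ((x1 + t) mod int n, x2, x3)" for t
    by (simp add: M_eq mod_Zn ovf_zero_right)
  show ?thesis
  proof (intro Set.set_eqI iffI)
    fix w assume "w \<in> lcoset M (x1, x2, x3) Z0"
    then show "w \<in> Zn n \<times> {(x2, x3)}"
      using n_pos by (auto simp: lcoset_def shift mod_in_Zn)
  next
    fix w assume "w \<in> Zn n \<times> {(x2, x3)}"
    then obtain t where w: "w = (t, x2, x3)" "t \<in> Zn n"
      by auto
    then have "w = M (x1, x2, x3) ((t - x1) mod int n, 0, 0)"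
      by (simp add: shift mod_Zn mod_simps)
    then show "w \<in> lcoset M (x1, x2, x3) Z0"
      using n_pos by (auto simp: lcoset_def intro: mod_in_Zn)
  qed
qed

lemma carrier_Q_mod_Z0: "carrier Q_mod_Z0 = (\<lambda>r. Zn n \<times> {r}) ` (Zn n \<times> Zn n)"
proof -
  have "(\<lambda>x. lcoset M x Z0) ` S = (\<lambda>r. Zn n \<times> {r}) ` (Zn n \<times> Zn n)"
  proof
    show "(\<lambda>x. lcoset M x Z0) ` S \<subseteq> (\<lambda>r. Zn n \<times> {r}) ` (Zn n \<times> Zn n)"
    proof
      fix C assume "C \<in> (\<lambda>x. lcoset M x Z0) ` S"
      then obtain x1 x2 x3 where x: "(x1, x2, x3) \<in> S" "C = lcoset M (x1, x2, x3) Z0"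
        by auto
      then show "C \<in> (\<lambda>r. Zn n \<times> {r}) ` (Zn n \<times> Zn n)"
        by (auto simp: lcoset_Z0 mem_Qcar_iff)
    qed
    show "(\<lambda>r. Zn n \<times> {r}) ` (Zn n \<times> Zn n) \<subseteq> (\<lambda>x. lcoset M x Z0) ` S"
    proof
      fix C assume "C \<in> (\<lambda>r. Zn n \<times> {r}) ` (Zn n \<times> Zn n)"
      then obtain p q where pq: "p \<in> Zn n" "q \<in> Zn n" "C = Zn n \<times> {(p, q)}"
        by auto
      have "(0, p, q) \<in> S"
        using n_pos pq by (simp add: mem_Qcar_iff mem_Zn_iff)
      moreover have "C = lcoset M (0, p, q) Z0"
        using lcoset_Z0[OF calculation] pq by simp
      ultimately show "C \<in> (\<lambda>x. lcoset M x Z0) ` S"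
        by blast
    qed
  qed
  then show ?thesis
    by (simp add: quotient_loop_def)
qed

lemma some_in_fibre:
  assumes "p \<in> Zn n" "q \<in> Zn n"
  obtains t where "t \<in> Zn n" "(SOME x. x \<in> Zn n \<times> {(p, q)}) = (t, p, q)"
proof -
  have "(0, p, q) \<in> Zn n \<times> {(p, q)}"
    using n_pos by (simp add: mem_Zn_iff)
  then have "(SOME x. x \<in> Zn n \<times> {(p, q)}) \<in> Zn n \<times> {(p, q)}"
    by (rule someI)
  then show ?thesis
    using that by auto
qed

lemma mult_Q_mod_Z0:
  assumes "p \<in> Zn n" "q \<in> Zn n" "p' \<in> Zn n" "q' \<in> Zn n"
  shows "(Zn n \<times> {(p, q)}) \<otimes>\<^bsub>Q_mod_Z0\<^esub> (Zn n \<times> {(p', q')})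
       = Zn n \<times> {((p + p') mod int n, (q + q') mod int n)}"
proof -
  obtain t where t: "t \<in> Zn n" "(SOME x. x \<in> Zn n \<times> {(p, q)}) = (t, p, q)"
    using some_in_fibre[OF assms(1,2)] .
  obtain t' where t': "t' \<in> Zn n" "(SOME x. x \<in> Zn n \<times> {(p', q')}) = (t', p', q')"
    using some_in_fibre[OF assms(3,4)] .
  have "(t, p, q) \<in> S" "(t', p', q') \<in> S"
    using assms t t' by (simp_all add: mem_Qcar_iff)
  then have "M (t, p, q) (t', p', q') \<in> S"
    by (rule M_closed)
  then show ?thesis
    by (simp add: quotient_loop_def t t' M_eq lcoset_Z0)
qed

lemma iso_Zn2_Q_mod_Z0: "(\<lambda>r. Zn n \<times> {r}) \<in> iso Zn2 Q_mod_Z0"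
proof (rule isoI)
  show "(\<lambda>r. Zn n \<times> {r}) \<in> hom Zn2 Q_mod_Z0"
  proof (rule homI)
    fix r assume "r \<in> carrier Zn2"
    then show "Zn n \<times> {r} \<in> carrier Q_mod_Z0"
      unfolding carrier_Zn2 carrier_Q_mod_Z0 by blast
  next
    fix r r' assume "r \<in> carrier Zn2" "r' \<in> carrier Zn2"
    then obtain p q p' q' where "r = (p, q)" "r' = (p', q')" "p \<in> Zn n" "q \<in> Zn n" "p' \<in> Zn n" "q' \<in> Zn n"
      unfolding carrier_Zn2 by blast
    then show "Zn n \<times> {r \<otimes>\<^bsub>Zn2\<^esub> r'} = (Zn n \<times> {r}) \<otimes>\<^bsub>Q_mod_Z0\<^esub> (Zn n \<times> {r'})"
      by (simp add: mult_Q_mod_Z0)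
  qed
  have "inj_on (\<lambda>r. Zn n \<times> {r}) (Zn n \<times> Zn n)"
    by (auto simp: inj_on_def fibre_eq_iff[OF n_pos])
  then show "bij_betw (\<lambda>r. Zn n \<times> {r}) (carrier Zn2) (carrier Q_mod_Z0)"
    unfolding carrier_Zn2 carrier_Q_mod_Z0 by (rule bij_betw_imageI) (rule refl)
qed

lemma iso_Zn2_Inn_group: "(\<lambda>(\<alpha>, \<beta>). shear n \<alpha> \<beta>) \<in> iso Zn2 (Inn_group S M)"
proof (rule isoI)
  have carrier: "carrier (Inn_group S M) = (\<lambda>(\<alpha>, \<beta>). shear n \<alpha> \<beta>) ` (Zn n \<times> Zn n)"
    by (simp add: Inn_group_def Inn_eq_shears)
  show "(\<lambda>(\<alpha>, \<beta>). shear n \<alpha> \<beta>) \<in> hom Zn2 (Inn_group S M)"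
  proof (rule homI)
    fix r assume "r \<in> carrier Zn2"
    then show "(\<lambda>(\<alpha>, \<beta>). shear n \<alpha> \<beta>) r \<in> carrier (Inn_group S M)"
      unfolding carrier_Zn2 carrier by blast
  next
    fix r r' :: "int \<times> int"
    obtain p q p' q' where "r = (p, q)" "r' = (p', q')"
      by (cases r, cases r')
    then show "(\<lambda>(\<alpha>, \<beta>). shear n \<alpha> \<beta>) (r \<otimes>\<^bsub>Zn2\<^esub> r')
        = (\<lambda>(\<alpha>, \<beta>). shear n \<alpha> \<beta>) r \<otimes>\<^bsub>Inn_group S M\<^esub> (\<lambda>(\<alpha>, \<beta>). shear n \<alpha> \<beta>) r'"
      by (simp add: Inn_group_def shear_mod shear_comp)
  qed
  have "inj_on (\<lambda>(\<alpha>, \<beta>). shear n \<alpha> \<beta>) (Zn n \<times> Zn n)"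
    by (auto simp: inj_on_def shear_eq_iff[OF two_le_n] mod_Zn)
  then show "bij_betw (\<lambda>(\<alpha>, \<beta>). shear n \<alpha> \<beta>) (carrier Zn2) (carrier (Inn_group S M))"
    unfolding carrier_Zn2 carrier by (rule bij_betw_imageI) (rule refl)
qed

lemma group_Zn2: "group Zn2"
  by (simp add: DirProd_group)

lemma Inn_group_iso_Zn2: "Inn_group S M \<cong> Zn2"
  using group.iso_sym[OF group_Zn2 is_isoI[OF iso_Zn2_Inn_group]] .

lemma Q_mod_Z0_iso_Zn2: "Q_mod_Z0 \<cong> Zn2"
  using group.iso_sym[OF group_Zn2 is_isoI[OF iso_Zn2_Q_mod_Z0]] .

lemma Q_mod_Z0_iso_Inn_group: "Q_mod_Z0 \<cong> Inn_group S M"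
  using iso_trans[OF Q_mod_Z0_iso_Zn2 is_isoI[OF iso_Zn2_Inn_group]] .

end

theorem proposition5p4:
  fixes n :: nat and a b :: int
  assumes hn: "n \<ge> 2"
    and ha: "a \<in> Zn n" and hb: "b \<in> Zn n"
  defines "Q \<equiv> Qcar n" and "m \<equiv> Qmul n a b"
  shows
    "(\<forall>x1 x2 x3 y1 y2 y3. (x1, x2, x3) \<in> Q \<longrightarrow> (y1, y2, y3) \<in> Q \<longrightarrow>
        ldiv Q m (x1, x2, x3) (y1, y2, y3) =
          ((y1 - x1 - ((y3 - x3) mod int n) * x3 * y2 - a * ovf n x2 ((y2 - x2) mod int n)
               - b * ovf n x3 ((y3 - x3) mod int n)) mod int n,
           (y2 - x2) mod int n, (y3 - x3) mod int n))
   \<and> (\<forall>x1 x2 x3 y1 y2 y3 z1 z2 z3. (x1, x2, x3) \<in> Q \<longrightarrow> (y1, y2, y3) \<in> Q \<longrightarrow> (z1, z2, z3) \<in> Q \<longrightarrow>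
        ldiv Q m (m (x1, x2, x3) (y1, y2, y3)) (m (x1, x2, x3) (m (y1, y2, y3) (z1, z2, z3))) =
          ((z1 + y3 * (x3 * z2 - x2 * z3)) mod int n, z2, z3))
   \<and> (is_A_loop Q m Qone \<and> is_commutative Q m \<and> \<not> is_associative Q m \<and> card Q = n ^ 3)
   \<and> (left_nucleus Q m = Zn n \<times> {0} \<times> {0} \<and> loop_center Q m = Zn n \<times> {0} \<times> {0}
      \<and> middle_nucleus Q m = Zn n \<times> Zn n \<times> {0})
   \<and> (quotient_loop Q m Qone (loop_center Q m) \<cong> Inn_group Q m
      \<and> Inn_group Q m \<cong> integer_mod_group n \<times>\<times> integer_mod_group n
      \<and> quotient_loop Q m Qone (loop_center Q m) \<cong> integer_mod_group n \<times>\<times> integer_mod_group n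
      \<and> Inn Q m = {Lmap Q m u v | u v. u \<in> Q \<and> v \<in> Q})
   \<and> (\<forall>x1 x2 x3 k. (x1, x2, x3) \<in> Q \<longrightarrow>
        loop_pow m Qone (x1, x2, x3) k =
          ((int k * x1 + 2 * int ((k + 1) choose 3) * x2 * x3 ^ 2
              + a * (\<Sum>j\<in>{1..<k}. ovf n x2 ((int j * x2) mod int n))
              + b * (\<Sum>j\<in>{1..<k}. ovf n x3 ((int j * x3) mod int n))) mod int n,
           (int k * x2) mod int n, (int k * x3) mod int n))"
proof -
  interpret Qab_ge2 n a b
    by unfold_locales (rule hn)
  have associator:
    "ldiv S M (M (x1, x2, x3) (y1, y2, y3)) (M (x1, x2, x3) (M (y1, y2, y3) (z1, z2, z3)))
       = ((z1 + y3 * (x3 * z2 - x2 * z3)) mod int n, z2, z3)"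
    if "(x1, x2, x3) \<in> S" "(y1, y2, y3) \<in> S" "(z1, z2, z3) \<in> S" for x1 x2 x3 y1 y2 y3 z1 z2 z3
    using ldiv_assoc[OF n_pos that] that(3) by (simp add: shear_apply algebra_simps)
  show ?thesis
    unfolding Q_def m_def loop_center_Q
    using is_A_loop_Q is_commutative_Q not_associative_Q card_Q left_nucleus_Q middle_nucleus_Q
      Q_mod_Z0_iso_Inn_group Inn_group_iso_Zn2 Q_mod_Z0_iso_Zn2 Inn_eq_Lmaps
    by (simp add: ldiv_eq_Qldiv[OF n_pos] Qldiv_def associator loop_pow_Q)
qed

end
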